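(* Let $\gamma\in(0,\infty)$, $\kappa>0$, $\rho_0=\frac1{1+\gamma}$, $\rho_\pm=\rho_0\pm\kappa n^{-1/3}$, and fix constants $M_1,M_2$. For any $-M_1\le v\le u\le M_2$: (a) if $Z^{\rho_+}(\gamma^2n-\beta_1M_1n^{2/3},n)\ge0$, then $$L^{\rm resc,h}_n(u)-L^{\rm resc,h}_n(v)\le B^{\rho_+}_n(u)-B^{\rho_+}_n(v)+(u^2-v^2)+2\beta_2\kappa(u-v)+O(n^{-1/3});$$ (b) if $Z^{\rho_-}(\gamma^2n+\beta_1M_2n^{2/3},n)\le0$, then $$L^{\rm resc,h}_n(u)-L^{\rm resc,h}_n(v)\ge B^{\rho_-}_n(u)-B^{\rho_-}_n(v)+(u^2-v^2)-2\beta_2\kappa(u-v)+O(n^{-1/3}).$$ Here $O(n^{-1/3})$ is uniform for $\kappa$ and $\gamma$ in bounded subsets of $(0,\infty)$.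
   Context: Coupled LPP models: for $\rho\in(0,1)$, let $\omega_{i,j}$, $i,j\ge0$, be independent with $\omega_{0,0}=0$, $\omega_{i,0}\sim{\rm Exp}(1-\rho)$ ($i\ge1$), $\omega_{0,j}\sim{\rm Exp}(\rho)$ ($j\ge1$), $\omega_{i,j}\sim{\rm Exp}(1)$ ($i,j\ge1$), where ${\rm Exp}(a)$ has mean $1/a$. $L^\rho(m,n)$ is the maximum over up-right paths $\pi=(\pi(0),\dots,\pi(\ell))$ (steps $(1,0)$ or $(0,1)$) from $(0,0)$ to $(m,n)$ of $\sum_{k=1}^\ell\omega_{\pi(k)}$, and $L(m,n)=L_{(0,0)\to(m,n)}$ is the same quantity computed with the same bulk weights but with $\omega_{i,0}=\omega_{0,j}=0$. The exit point of the maximizing path for $L^\rho(m,n)$ is its last point on the axes; $Z^\rho(m,n)=k$ if it is $(k,0)$, $k>0$, and $-k$ if it is $(0,k)$, $k>0$. Coordinates are understood with integer parts. Set $\beta_1=2(1+\gamma)^{2/3}\gamma^{4/3}$, $\beta_2=(1+\gamma)^{4/3}\gamma^{-1/3}$, $$L^{\rm resc,h}_n(u)=\frac{L(\gamma^2n+\beta_1un^{2/3},n)-\big((1+\gamma)^2n+2u(1+\gamma)^{5/3}\gamma^{1/3}n^{2/3}-\beta_2u^2n^{1/3}\big)}{\beta_2n^{1/3}},$$ $$B^{\rho_\pm}_n(u)=\frac{L^{\rho_\pm}(\gamma^2n+\beta_1un^{2/3},n)-\big(L^{\rho_\pm}(\gamma^2n,n)+\frac1{1-\rho_\pm}\beta_1un^{2/3}\big)}{\beta_2n^{1/3}}.$$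 *)

theory Defs
  imports "HOL-Probability.Probability"
begin

definition up_right_paths :: "nat \<times> nat \<Rightarrow> nat \<times> nat \<Rightarrow> (nat \<times> nat) list set" where
  "up_right_paths a b = {\<pi>. \<pi> \<noteq> [] \<and> hd \<pi> = a \<and> last \<pi> = b \<and>
     (\<forall>k. Suc k < length \<pi> \<longrightarrow>
        (\<pi> ! Suc k = (fst (\<pi> ! k) + 1, snd (\<pi> ! k)) \<or>
         \<pi> ! Suc k = (fst (\<pi> ! k), snd (\<pi> ! k) + 1)))}"

(* weight of a path: sum of w(pi(k)) for k = 1..l (the starting point is excluded) *)
definition path_weight :: "(nat \<times> nat \<Rightarrow> real) \<Rightarrow> (nat \<times> nat) list \<Rightarrow> real" where
  "path_weight w \<pi> = sum_list (map w (tl \<pi>))"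

definition lpp :: "(nat \<times> nat \<Rightarrow> real) \<Rightarrow> nat \<times> nat \<Rightarrow> nat \<times> nat \<Rightarrow> real" where
  "lpp w a b = Max (path_weight w ` up_right_paths a b)"

(* L^rho(m,n): LPP from (0,0) with the weights w (including boundary weights) *)
definition Lrho :: "(nat \<times> nat \<Rightarrow> real) \<Rightarrow> nat \<Rightarrow> nat \<Rightarrow> real" where
  "Lrho w m n = lpp w (0,0) (m,n)"

definition Lbulk :: "(nat \<times> nat \<Rightarrow> real) \<Rightarrow> nat \<Rightarrow> nat \<Rightarrow> real" where
  "Lbulk w m n = lpp (\<lambda>p. if fst p = 0 \<or> snd p = 0 then 0 else w p) (0,0) (m,n)"

(* the (a.s. unique) maximizing path for L^rho(m,n) *)
definition geodesic :: "(nat \<times> nat \<Rightarrow> real) \<Rightarrow> nat \<Rightarrow> nat \<Rightarrow> (nat \<times> nat) list" where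
  "geodesic w m n = (THE \<pi>. \<pi> \<in> up_right_paths (0,0) (m,n) \<and> path_weight w \<pi> = Lrho w m n)"

definition exit_point :: "(nat \<times> nat \<Rightarrow> real) \<Rightarrow> nat \<Rightarrow> nat \<Rightarrow> nat \<times> nat" where
  "exit_point w m n = last (filter (\<lambda>p. fst p = 0 \<or> snd p = 0) (geodesic w m n))"

definition Zexit :: "(nat \<times> nat \<Rightarrow> real) \<Rightarrow> nat \<Rightarrow> nat \<Rightarrow> int" where
  "Zexit w m n = (let e = exit_point w m n in
      if snd e = 0 then int (fst e) else - int (snd e))"

definition coord :: "real \<Rightarrow> nat" where
  "coord x = nat \<lfloor>x\<rfloor>"

definition beta1 :: "real \<Rightarrow> real" where
  "beta1 \<gamma> = 2 * (1 + \<gamma>) powr (2/3) * \<gamma> powr (4/3)"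

definition beta2 :: "real \<Rightarrow> real" where
  "beta2 \<gamma> = (1 + \<gamma>) powr (4/3) * \<gamma> powr (-1/3)"

definition Lresc_h :: "(nat \<times> nat \<Rightarrow> real) \<Rightarrow> real \<Rightarrow> nat \<Rightarrow> real \<Rightarrow> real" where
  "Lresc_h w \<gamma> n u =
     (Lbulk w (coord (\<gamma>\<^sup>2 * real n + beta1 \<gamma> * u * real n powr (2/3))) n
      - ((1 + \<gamma>)\<^sup>2 * real n + 2 * u * (1 + \<gamma>) powr (5/3) * \<gamma> powr (1/3) * real n powr (2/3)
         - beta2 \<gamma> * u\<^sup>2 * real n powr (1/3)))
     / (beta2 \<gamma> * real n powr (1/3))"

definition Bfun :: "(nat \<times> nat \<Rightarrow> real) \<Rightarrow> real \<Rightarrow> real \<Rightarrow> nat \<Rightarrow> real \<Rightarrow> real" where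
  "Bfun w \<rho> \<gamma> n u =
     (Lrho w (coord (\<gamma>\<^sup>2 * real n + beta1 \<gamma> * u * real n powr (2/3))) n
      - (Lrho w (coord (\<gamma>\<^sup>2 * real n)) n + 1 / (1 - \<rho>) * beta1 \<gamma> * u * real n powr (2/3)))
     / (beta2 \<gamma> * real n powr (1/3))"

end

theory Submission
  imports Defs
begin

text \<open>Under the coupling, \<open>L\<close> and \<open>L\<^sup>\<rho>\<close> share their bulk weights. If the
  \<open>L\<^sup>\<rho>\<close>-geodesic to some column leaves the origin along the \<open>x\<close>-axis, then so does the
  geodesic to every column further right, since geodesics to a common row are ordered; after its
  last boundary point \<open>(k, 0)\<close> it only uses bulk weights. A bulk geodesic of \<open>L\<close> to a column
  further right must meet it after that point, and exchanging the two tails there shows that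
  increments of \<open>L\<close> between columns are dominated by those of \<open>L\<^sup>\<rho>\<close>, the boundary
  weights being nonnegative. Exit through the \<open>y\<close>-axis gives the reverse inequality in the same
  way. Geodesics are almost surely unique: two distinct paths differ in a vertex whose weight has a
  density and is independent of the others. What remains is arithmetic: the linear drift
  \<open>\<beta>\<^sub>1 / (1 - \<rho>\<^sub>\<plusminus>)\<close> of \<open>B\<^sup>\<rho>\<^sup>\<plusminus>\<close> and that of the centring of \<open>L\<close> differ by
  \<open>\<plusminus>2 \<beta>\<^sub>2 \<kappa> + O(n\<^bsup>-1/3\<^esup>)\<close> per unit of \<open>u - v\<close>, uniformly for \<open>\<gamma>, \<kappa>\<close> in compact sets.\<close>

abbreviation paths_to :: "nat \<Rightarrow> nat \<Rightarrow> (nat \<times> nat) list set" where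
  "paths_to m n \<equiv> up_right_paths (0,0) (m,n)"

abbreviation on_axes :: "nat \<times> nat \<Rightarrow> bool" where
  "on_axes p \<equiv> fst p = 0 \<or> snd p = 0"

lemma up_right_paths_step:
  assumes "\<pi> \<in> up_right_paths a b" "Suc k < length \<pi>"
  shows "\<pi> ! Suc k = (fst (\<pi> ! k) + 1, snd (\<pi> ! k)) \<or> \<pi> ! Suc k = (fst (\<pi> ! k), snd (\<pi> ! k) + 1)"
  using assms unfolding up_right_paths_def by blast

lemma up_right_paths_nth_0: "\<pi> \<in> up_right_paths a b \<Longrightarrow> \<pi> ! 0 = a"
  unfolding up_right_paths_def by (auto simp: hd_conv_nth)

lemma up_right_paths_nth_last: "\<pi> \<in> up_right_paths a b \<Longrightarrow> \<pi> ! (length \<pi> - 1) = b"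
  unfolding up_right_paths_def by (auto simp: last_conv_nth)

lemma up_right_paths_nth_mono:
  assumes "\<pi> \<in> up_right_paths a b" "i \<le> j" "j < length \<pi>"
  shows "fst (\<pi> ! i) \<le> fst (\<pi> ! j) \<and> snd (\<pi> ! i) \<le> snd (\<pi> ! j)"
  using assms(2,3)
proof (induction j)
  case (Suc j)
  then show ?case
    using up_right_paths_step[OF assms(1) Suc.prems(2)] by (cases "i = Suc j") auto
qed simp

lemma paths_to_nth_sum:
  assumes "\<pi> \<in> paths_to m n" "i < length \<pi>"
  shows "fst (\<pi> ! i) + snd (\<pi> ! i) = i"
  using assms(2)
proof (induction i)
  case 0
  then show ?case using up_right_paths_nth_0[OF assms(1)] by simp
next
  case (Suc i)
  then show ?case using up_right_paths_step[OF assms(1) Suc.prems] by auto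
qed

lemma paths_to_length:
  assumes "\<pi> \<in> paths_to m n"
  shows "length \<pi> = m + n + 1"
proof -
  have "\<pi> \<noteq> []" using assms unfolding up_right_paths_def by auto
  then show ?thesis
    using paths_to_nth_sum[OF assms, of "length \<pi> - 1"] up_right_paths_nth_last[OF assms] by simp
qed

lemma paths_to_nth_le:
  assumes "\<pi> \<in> paths_to m n" "i < length \<pi>"
  shows "fst (\<pi> ! i) \<le> m \<and> snd (\<pi> ! i) \<le> n"
  using up_right_paths_nth_mono[OF assms(1), of i "length \<pi> - 1"] up_right_paths_nth_last[OF assms(1)] assms(2)
  by auto

lemma paths_to_nth_1:
  assumes "\<pi> \<in> paths_to m n" "1 \<le> m + n"
  shows "\<pi> ! 1 = (1,0) \<or> \<pi> ! 1 = (0,1)"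
  using up_right_paths_step[OF assms(1), of 0] up_right_paths_nth_0[OF assms(1)] paths_to_length[OF assms(1)] assms(2)
  by force

lemma finite_paths_to: "finite (paths_to m n)"
proof (rule finite_subset)
  show "paths_to m n \<subseteq> {xs. set xs \<subseteq> {..m} \<times> {..n} \<and> length xs = m + n + 1}"
    using paths_to_nth_le paths_to_length by (fastforce simp: in_set_conv_nth)
  show "finite {xs. set xs \<subseteq> {..m} \<times> {..n} \<and> length xs = m + n + 1}"
    by (rule finite_lists_length_eq) simp
qed

lemma paths_to_nonempty: "paths_to m n \<noteq> {}"
proof -
  define f where "f i = (if i \<le> m then (i, 0) else (m, i - m))" for i
  have "map f [0..<m+n+1] \<in> paths_to m n"
    unfolding up_right_paths_def by (auto simp: f_def hd_map last_map nth_Cons' simp del: upt_Suc)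
  then show ?thesis by blast
qed

definition splice_paths :: "nat \<Rightarrow> (nat \<times> nat) list \<Rightarrow> (nat \<times> nat) list \<Rightarrow> (nat \<times> nat) list" where
  "splice_paths i \<pi> \<sigma> = take (Suc i) \<pi> @ drop (Suc i) \<sigma>"

lemma splice_paths_nth:
  assumes "i < length \<pi>" "j < length \<sigma>"
  shows "splice_paths i \<pi> \<sigma> ! j = (if j \<le> i then \<pi> ! j else \<sigma> ! j)"
  using assms by (auto simp: splice_paths_def nth_append)

lemma splice_paths_in_paths_to:
  assumes \<pi>: "\<pi> \<in> paths_to m n" and \<sigma>: "\<sigma> \<in> paths_to m' n'"
    and i: "i < length \<pi>" "i < length \<sigma>" and meet: "\<pi> ! i = \<sigma> ! i"
  shows "splice_paths i \<pi> \<sigma> \<in> paths_to m' n'"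
proof -
  let ?s = "splice_paths i \<pi> \<sigma>"
  have len: "length ?s = length \<sigma>" using i by (simp add: splice_paths_def)
  have nth: "?s ! j = (if j \<le> i then \<pi> ! j else \<sigma> ! j)" if "j < length \<sigma>" for j
    using splice_paths_nth[OF i(1) that] .
  have "0 < length \<sigma>" using i by linarith
  then have "?s ! 0 = (0,0)" using nth[of 0] up_right_paths_nth_0[OF \<pi>] by simp
  moreover have "?s ! (length ?s - 1) = (m',n')"
  proof (cases "i = length \<sigma> - 1")
    case True
    then show ?thesis using nth[of i] i meet up_right_paths_nth_last[OF \<sigma>] len by simp
  next
    case False
    then have "i < length \<sigma> - 1" using i by linarith
    then show ?thesis using nth[of "length \<sigma> - 1"] up_right_paths_nth_last[OF \<sigma>] len by simp
  qed
  moreover have "?s ! Suc k = (fst (?s ! k) + 1, snd (?s ! k)) \<or> ?s ! Suc k = (fst (?s ! k), snd (?s ! k) + 1)"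
    if k: "Suc k < length ?s" for k
  proof -
    consider "Suc k \<le> i" | "k = i" | "i < k" by linarith
    then show ?thesis
      using k len nth[of k] nth[of "Suc k"] meet i up_right_paths_step[OF \<pi>, of k] up_right_paths_step[OF \<sigma>, of k]
      by cases auto
  qed
  moreover have "?s \<noteq> []" using i len by auto
  ultimately show ?thesis
    unfolding up_right_paths_def by (simp add: hd_conv_nth last_conv_nth)
qed

lemma path_weight_append: "xs \<noteq> [] \<Longrightarrow> path_weight w (xs @ ys) = path_weight w xs + sum_list (map w ys)"
  by (simp add: path_weight_def)

lemma path_weight_take_drop:
  assumes "i < length \<pi>"
  shows "path_weight w \<pi> = path_weight w (take (Suc i) \<pi>) + sum_list (map w (drop (Suc i) \<pi>))"
proof -
  have "take (Suc i) \<pi> \<noteq> []" using assms by auto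
  then show ?thesis using path_weight_append[of "take (Suc i) \<pi>" w "drop (Suc i) \<pi>"] by simp
qed

lemma path_weight_splice:
  "i < length \<pi> \<Longrightarrow> path_weight w (splice_paths i \<pi> \<sigma>) = path_weight w (take (Suc i) \<pi>) + sum_list (map w (drop (Suc i) \<sigma>))"
  unfolding splice_paths_def by (rule path_weight_append) auto

lemma path_weight_le_lpp: "\<pi> \<in> paths_to m n \<Longrightarrow> path_weight w \<pi> \<le> lpp w (0,0) (m,n)"
  unfolding lpp_def using finite_paths_to by (intro Max_ge) auto

lemma lpp_attained: "\<exists>\<pi>\<in>paths_to m n. path_weight w \<pi> = lpp w (0,0) (m,n)"
proof -
  have "lpp w (0,0) (m,n) \<in> path_weight w ` paths_to m n"
    unfolding lpp_def using finite_paths_to paths_to_nonempty by (intro Max_in) auto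
  then show ?thesis by auto
qed

lemma lpp_exchange:
  assumes \<pi>: "\<pi> \<in> paths_to m n" "path_weight w1 \<pi> = lpp w1 (0,0) (m,n)"
    and \<sigma>: "\<sigma> \<in> paths_to m' n'" "path_weight w2 \<sigma> = lpp w2 (0,0) (m',n')"
    and i: "i < length \<pi>" "i < length \<sigma>" and meet: "\<pi> ! i = \<sigma> ! i"
    and le: "\<And>p. w2 p \<le> w1 p"
    and tail: "\<And>p. p \<in> set (drop (Suc i) \<pi>) \<Longrightarrow> w2 p = w1 p"
  shows "lpp w2 (0,0) (m',n') - lpp w2 (0,0) (m,n) \<le> lpp w1 (0,0) (m',n') - lpp w1 (0,0) (m,n)"
proof -
  let ?T\<pi> = "drop (Suc i) \<pi>" and ?T\<sigma> = "drop (Suc i) \<sigma>"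
  have "path_weight w1 (take (Suc i) \<pi>) + sum_list (map w1 ?T\<sigma>) \<le> lpp w1 (0,0) (m',n')"
    using path_weight_le_lpp[OF splice_paths_in_paths_to[OF \<pi>(1) \<sigma>(1) i meet]] path_weight_splice[OF i(1)] by simp
  moreover have "path_weight w2 (take (Suc i) \<sigma>) + sum_list (map w2 ?T\<pi>) \<le> lpp w2 (0,0) (m,n)"
    using path_weight_le_lpp[OF splice_paths_in_paths_to[OF \<sigma>(1) \<pi>(1) i(2,1) meet[symmetric]]]
      path_weight_splice[OF i(2)] by simp
  moreover have "lpp w1 (0,0) (m,n) = path_weight w1 (take (Suc i) \<pi>) + sum_list (map w1 ?T\<pi>)"
    using \<pi>(2) path_weight_take_drop[OF i(1)] by simp
  moreover have "lpp w2 (0,0) (m',n') = path_weight w2 (take (Suc i) \<sigma>) + sum_list (map w2 ?T\<sigma>)"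
    using \<sigma>(2) path_weight_take_drop[OF i(2)] by simp
  moreover have "sum_list (map w2 ?T\<pi>) = sum_list (map w1 ?T\<pi>)"
    using tail by (intro arg_cong[where f = sum_list] map_cong) auto
  moreover have "sum_list (map w2 ?T\<sigma>) \<le> sum_list (map w1 ?T\<sigma>)"
    by (rule sum_list_mono) (rule le)
  ultimately show ?thesis by linarith
qed

lemma splice_paths_geodesic:
  assumes \<pi>: "\<pi> \<in> paths_to m n" "path_weight w \<pi> = lpp w (0,0) (m,n)"
    and \<tau>: "\<tau> \<in> paths_to m' n'" "path_weight w \<tau> = lpp w (0,0) (m',n')"
    and i: "i < length \<pi>" "i < length \<tau>" and meet: "\<pi> ! i = \<tau> ! i"
  shows "path_weight w (splice_paths i \<pi> \<tau>) = lpp w (0,0) (m',n')"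
proof -
  have "path_weight w (splice_paths i \<pi> \<tau>) \<le> lpp w (0,0) (m',n')"
    by (rule path_weight_le_lpp[OF splice_paths_in_paths_to[OF \<pi>(1) \<tau>(1) i meet]])
  moreover have "path_weight w (splice_paths i \<tau> \<pi>) \<le> lpp w (0,0) (m,n)"
    by (rule path_weight_le_lpp[OF splice_paths_in_paths_to[OF \<tau>(1) \<pi>(1) i(2,1) meet[symmetric]]])
  ultimately show ?thesis
    using \<pi>(2) \<tau>(2) path_weight_splice[OF i(1), of w \<tau>] path_weight_splice[OF i(2), of w \<pi>]
      path_weight_take_drop[OF i(1), of w] path_weight_take_drop[OF i(2), of w] by linarith
qed

lemma paths_to_meet:
  assumes \<pi>: "\<pi> \<in> paths_to m n" and \<sigma>: "\<sigma> \<in> paths_to m' n'"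
    and i: "i0 \<le> i1" "i1 < length \<pi>" "i1 < length \<sigma>"
    and "fst (\<pi> ! i0) \<le> fst (\<sigma> ! i0)" "fst (\<sigma> ! i1) \<le> fst (\<pi> ! i1)"
  shows "\<exists>i. i0 \<le> i \<and> i \<le> i1 \<and> \<pi> ! i = \<sigma> ! i"
proof -
  define d where "d k = int (fst (\<pi> ! k)) - int (fst (\<sigma> ! k))" for k
  have "\<bar>d (Suc k) - d k\<bar> \<le> 1" if "k < i1" for k
    using up_right_paths_step[OF \<pi>, of k] up_right_paths_step[OF \<sigma>, of k] that i
    unfolding d_def by auto
  then obtain i where "i0 \<le> i" "i \<le> i1" "d i = 0"
    using nat_intermed_int_val[of i0 i1 d 0] assms by (auto simp: d_def)
  moreover from this have "\<pi> ! i = \<sigma> ! i"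
    using paths_to_nth_sum[OF \<pi>, of i] paths_to_nth_sum[OF \<sigma>, of i] i
    by (simp add: d_def prod_eq_iff)
  ultimately show ?thesis by blast
qed

definition distinct_path_weights :: "(nat \<times> nat \<Rightarrow> real) \<Rightarrow> bool" where
  "distinct_path_weights w \<longleftrightarrow> (\<forall>m n. inj_on (path_weight w) (paths_to m n))"

lemma
  assumes "distinct_path_weights w"
  shows geodesic_in_paths_to: "geodesic w m n \<in> paths_to m n"
    and path_weight_geodesic: "path_weight w (geodesic w m n) = Lrho w m n"
proof -
  obtain \<pi> where \<pi>: "\<pi> \<in> paths_to m n" "path_weight w \<pi> = Lrho w m n"
    using lpp_attained[of m n w] unfolding Lrho_def by blast
  have "geodesic w m n = \<pi>"
    unfolding geodesic_def
  proof (rule the_equality)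
    fix \<tau> assume "\<tau> \<in> paths_to m n \<and> path_weight w \<tau> = Lrho w m n"
    then show "\<tau> = \<pi>"
      using \<pi> assms unfolding distinct_path_weights_def by (metis inj_onD)
  qed (use \<pi> in blast)
  then show "geodesic w m n \<in> paths_to m n" "path_weight w (geodesic w m n) = Lrho w m n"
    using \<pi> by simp_all
qed

lemma geodesic_unique:
  assumes "distinct_path_weights w" "\<pi> \<in> paths_to m n" "path_weight w \<pi> = Lrho w m n"
  shows "\<pi> = geodesic w m n"
  using assms geodesic_in_paths_to[OF assms(1)] path_weight_geodesic[OF assms(1)]
  unfolding distinct_path_weights_def by (metis inj_onD)

text \<open>If the geodesic to the column further right went up first, the two geodesics would meet;
  following the first one up to the meeting point would then give a second geodesic.\<close>
lemma geodesic_first_step_mono: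
  assumes w: "distinct_path_weights w" and "m \<le> m'" "1 \<le> m + n"
    and right: "geodesic w m n ! 1 = (1,0)"
  shows "geodesic w m' n ! 1 = (1,0)"
proof (rule ccontr)
  let ?\<pi> = "geodesic w m n" and ?\<tau> = "geodesic w m' n"
  note \<pi> = geodesic_in_paths_to[OF w, of m n] path_weight_geodesic[OF w, of m n]
  note \<tau> = geodesic_in_paths_to[OF w, of m' n] path_weight_geodesic[OF w, of m' n]
  have len: "length ?\<pi> = m + n + 1" "length ?\<tau> = m' + n + 1"
    using paths_to_length \<pi>(1) \<tau>(1) by auto
  assume "?\<tau> ! 1 \<noteq> (1,0)"
  then have up: "?\<tau> ! 1 = (0,1)" using paths_to_nth_1[OF \<tau>(1)] assms by auto
  have "fst (?\<pi> ! (m + n)) \<le> fst (?\<tau> ! (m + n))"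
    using up_right_paths_nth_last[OF \<pi>(1)] paths_to_nth_sum[OF \<tau>(1), of "m + n"]
      paths_to_nth_le[OF \<tau>(1), of "m + n"] len assms by auto
  then obtain i where i: "1 \<le> i" "i \<le> m + n" "?\<tau> ! i = ?\<pi> ! i"
    using paths_to_meet[OF \<tau>(1) \<pi>(1), of 1 "m + n"] up right len assms by auto
  have i_len: "i < length ?\<pi>" "i < length ?\<tau>" using i len assms by auto
  have "path_weight w (splice_paths i ?\<pi> ?\<tau>) = Lrho w m' n"
    using splice_paths_geodesic[OF \<pi>(1) _ \<tau>(1) _ i_len i(3)[symmetric]] \<pi>(2) \<tau>(2) unfolding Lrho_def by blast
  then have "splice_paths i ?\<pi> ?\<tau> = ?\<tau>"
    by (rule geodesic_unique[OF w splice_paths_in_paths_to[OF \<pi>(1) \<tau>(1) i_len i(3)[symmetric]]])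
  moreover have "splice_paths i ?\<pi> ?\<tau> ! 1 = ?\<pi> ! 1"
    using splice_paths_nth[OF i_len(1), of 1 ?\<tau>] i(1) i_len(2) by simp
  ultimately have "?\<tau> ! 1 = ?\<pi> ! 1" by metis
  then show False using right up by (metis prod.inject zero_neq_one)
qed

lemma last_on_axes_index:
  assumes \<pi>: "\<pi> \<in> paths_to m n" and "1 \<le> m + n"
  obtains k where "1 \<le> k" "k < length \<pi>" "on_axes (\<pi> ! k)" "last (filter on_axes \<pi>) = \<pi> ! k"
    "\<forall>p\<in>set (drop (Suc k) \<pi>). \<not> on_axes p"
proof -
  define S where "S = {j. j < length \<pi> \<and> on_axes (\<pi> ! j)}"
  define k where "k = Max S"
  have S: "1 \<in> S" "finite S"
    using paths_to_nth_1[OF \<pi>] paths_to_length[OF \<pi>] assms unfolding S_def by auto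
  then have "k \<in> S" unfolding k_def by (intro Max_in) auto
  then have k: "k < length \<pi>" "on_axes (\<pi> ! k)" unfolding S_def by auto
  have k_max: "l \<le> k" if "l \<in> S" for l unfolding k_def using S(2) that by (rule Max_ge)
  have "1 \<le> k" using k_max[OF S(1)] .
  have off: "\<forall>p\<in>set (drop (Suc k) \<pi>). \<not> on_axes p"
  proof
    fix p assume "p \<in> set (drop (Suc k) \<pi>)"
    then obtain j where j: "j < length (drop (Suc k) \<pi>)" "p = drop (Suc k) \<pi> ! j"
      unfolding in_set_conv_nth by blast
    then have "Suc k + j \<notin> S" using k_max by fastforce
    then show "\<not> on_axes p" using j unfolding S_def by simp
  qed
  then have tail: "filter on_axes (drop (Suc k) \<pi>) = []" by (simp add: filter_empty_conv)
  have split: "\<pi> = take k \<pi> @ \<pi> ! k # drop (Suc k) \<pi>"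
    using k(1) by (rule id_take_nth_drop)
  have "filter on_axes \<pi> = filter on_axes (take k \<pi>) @ [\<pi> ! k]"
    by (subst (1) split) (simp add: k(2) tail)
  then have "last (filter on_axes \<pi>) = \<pi> ! k" by simp
  with \<open>1 \<le> k\<close> k show ?thesis using off by (rule that)
qed

lemma paths_to_nth_on_axes:
  assumes \<pi>: "\<pi> \<in> paths_to m n" and k: "1 \<le> k" "k < length \<pi>" "on_axes (\<pi> ! k)"
  shows "\<pi> ! 1 = (1,0) \<and> \<pi> ! k = (k,0) \<or> \<pi> ! 1 = (0,1) \<and> \<pi> ! k = (0,k)"
  using paths_to_nth_1[OF \<pi>] paths_to_length[OF \<pi>] paths_to_nth_sum[OF \<pi> k(2)]
    up_right_paths_nth_mono[OF \<pi> k(1,2)] k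
  by (auto simp: prod_eq_iff)

lemma Zexit_first_step:
  assumes w: "distinct_path_weights w" and "1 \<le> m + n"
  shows "0 \<le> Zexit w m n \<Longrightarrow> geodesic w m n ! 1 = (1,0)"
    and "Zexit w m n \<le> 0 \<Longrightarrow> geodesic w m n ! 1 = (0,1)"
proof -
  let ?g = "geodesic w m n"
  obtain k where k: "1 \<le> k" "k < length ?g" "on_axes (?g ! k)" "exit_point w m n = ?g ! k"
    using last_on_axes_index[OF geodesic_in_paths_to[OF w] assms(2)] unfolding exit_point_def by blast
  have "?g ! 1 = (1,0) \<and> ?g ! k = (k,0) \<or> ?g ! 1 = (0,1) \<and> ?g ! k = (0,k)"
    by (rule paths_to_nth_on_axes[OF geodesic_in_paths_to[OF w] k(1-3)])
  then have "?g ! 1 = (1,0) \<and> Zexit w m n = int k \<or> ?g ! 1 = (0,1) \<and> Zexit w m n = - int k"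
    using k(1,4) unfolding Zexit_def Let_def by auto
  then show "0 \<le> Zexit w m n \<Longrightarrow> ?g ! 1 = (1,0)" "Zexit w m n \<le> 0 \<Longrightarrow> ?g ! 1 = (0,1)"
    using k(1) by auto
qed

definition bulk_weights :: "(nat \<times> nat \<Rightarrow> real) \<Rightarrow> nat \<times> nat \<Rightarrow> real" where
  "bulk_weights w p = (if on_axes p then 0 else w p)"

lemma Lbulk_eq_lpp: "Lbulk w m n = lpp (bulk_weights w) (0,0) (m,n)"
  by (simp add: Lbulk_def bulk_weights_def[abs_def])

lemma geodesic_last_on_axes:
  assumes w: "distinct_path_weights w" and "1 \<le> m + n"
  obtains k where "1 \<le> k" "k < length (geodesic w m n)" "on_axes (geodesic w m n ! k)"
    "\<forall>p\<in>set (drop (Suc k) (geodesic w m n)). \<not> on_axes p"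
  using last_on_axes_index[OF geodesic_in_paths_to[OF w] assms(2)] by blast

lemma Lbulk_increment_le_Lrho_increment:
  assumes bulk: "\<And>p. \<not> on_axes p \<Longrightarrow> wr p = w p" and nonneg: "\<And>p. on_axes p \<Longrightarrow> 0 \<le> wr p"
    and wr: "distinct_path_weights wr" and n: "1 \<le> n" and m: "m0 \<le> mv" "mv \<le> mu"
    and Z: "0 \<le> Zexit wr m0 n"
  shows "Lbulk w mu n - Lbulk w mv n \<le> Lrho wr mu n - Lrho wr mv n"
proof -
  let ?\<pi> = "geodesic wr mv n" and ?wB = "bulk_weights w"
  note \<pi> = geodesic_in_paths_to[OF wr, of mv n] path_weight_geodesic[OF wr, of mv n]
  have right: "?\<pi> ! 1 = (1,0)"
    using geodesic_first_step_mono[OF wr m(1) _ Zexit_first_step(1)[OF wr _ Z]] n by simp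
  obtain k where k: "1 \<le> k" "k < length ?\<pi>" "on_axes (?\<pi> ! k)"
      and off: "\<forall>p\<in>set (drop (Suc k) ?\<pi>). \<not> on_axes p"
    using geodesic_last_on_axes[OF wr, of mv n] n by auto
  have exit: "?\<pi> ! k = (k,0)" using paths_to_nth_on_axes[OF \<pi>(1) k] right by auto
  obtain \<sigma> where \<sigma>: "\<sigma> \<in> paths_to mu n" "path_weight ?wB \<sigma> = lpp ?wB (0,0) (mu,n)"
    using lpp_attained by blast
  have len: "length ?\<pi> = mv + n + 1" "length \<sigma> = mu + n + 1"
    using paths_to_length \<pi>(1) \<sigma>(1) by auto
  have "fst (\<sigma> ! k) \<le> fst (?\<pi> ! k)"
    using paths_to_nth_sum[OF \<sigma>(1), of k] exit len k m by auto
  moreover have "fst (?\<pi> ! (mv + n)) \<le> fst (\<sigma> ! (mv + n))"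
    using up_right_paths_nth_last[OF \<pi>(1)] paths_to_nth_sum[OF \<sigma>(1), of "mv + n"]
      paths_to_nth_le[OF \<sigma>(1), of "mv + n"] len m by auto
  ultimately obtain i where i: "k \<le> i" "i \<le> mv + n" "\<sigma> ! i = ?\<pi> ! i"
    using paths_to_meet[OF \<sigma>(1) \<pi>(1), of k "mv + n"] len k m by auto
  have i_len: "i < length ?\<pi>" "i < length \<sigma>" using i len m by auto
  have "lpp ?wB (0,0) (mu,n) - lpp ?wB (0,0) (mv,n) \<le> lpp wr (0,0) (mu,n) - lpp wr (0,0) (mv,n)"
  proof (rule lpp_exchange[OF \<pi>(1) _ \<sigma> i_len i(3)[symmetric]])
    show "path_weight wr ?\<pi> = lpp wr (0,0) (mv,n)" using \<pi>(2) unfolding Lrho_def .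
    show "?wB p \<le> wr p" for p using bulk nonneg unfolding bulk_weights_def by simp
    show "?wB p = wr p" if "p \<in> set (drop (Suc i) ?\<pi>)" for p
    proof -
      have "\<not> on_axes p" using that off set_drop_subset_set_drop[of "Suc k" "Suc i" ?\<pi>] i(1) by auto
      then show ?thesis using bulk unfolding bulk_weights_def by simp
    qed
  qed
  then show ?thesis unfolding Lbulk_eq_lpp Lrho_def .
qed

lemma Lrho_increment_le_Lbulk_increment:
  assumes bulk: "\<And>p. \<not> on_axes p \<Longrightarrow> wr p = w p" and nonneg: "\<And>p. on_axes p \<Longrightarrow> 0 \<le> wr p"
    and wr: "distinct_path_weights wr" and n: "1 \<le> n" and m: "mv \<le> mu" "mu \<le> m2"
    and Z: "Zexit wr m2 n \<le> 0"
  shows "Lrho wr mu n - Lrho wr mv n \<le> Lbulk w mu n - Lbulk w mv n"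
proof -
  let ?\<pi> = "geodesic wr mu n" and ?wB = "bulk_weights w"
  note \<pi> = geodesic_in_paths_to[OF wr, of mu n] path_weight_geodesic[OF wr, of mu n]
  have up: "?\<pi> ! 1 = (0,1)"
  proof (rule ccontr)
    assume "?\<pi> ! 1 \<noteq> (0,1)"
    then have "?\<pi> ! 1 = (1,0)" using paths_to_nth_1[OF \<pi>(1)] n by auto
    then have "geodesic wr m2 n ! 1 = (1,0)" using geodesic_first_step_mono[OF wr m(2)] n by simp
    then show False using Zexit_first_step(2)[OF wr _ Z] n by simp
  qed
  obtain k where k: "1 \<le> k" "k < length ?\<pi>" "on_axes (?\<pi> ! k)"
      and off: "\<forall>p\<in>set (drop (Suc k) ?\<pi>). \<not> on_axes p"
    using geodesic_last_on_axes[OF wr, of mu n] n by auto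
  have exit: "?\<pi> ! k = (0,k)" using paths_to_nth_on_axes[OF \<pi>(1) k] up by auto
  obtain \<sigma> where \<sigma>: "\<sigma> \<in> paths_to mv n" "path_weight ?wB \<sigma> = lpp ?wB (0,0) (mv,n)"
    using lpp_attained by blast
  have len: "length ?\<pi> = mu + n + 1" "length \<sigma> = mv + n + 1"
    using paths_to_length \<pi>(1) \<sigma>(1) by auto
  have "k \<le> mv + n" using paths_to_nth_le[OF \<pi>(1) k(2)] exit by simp
  moreover have "fst (\<sigma> ! (mv + n)) \<le> fst (?\<pi> ! (mv + n))"
    using up_right_paths_nth_last[OF \<sigma>(1)] paths_to_nth_sum[OF \<pi>(1), of "mv + n"]
      paths_to_nth_le[OF \<pi>(1), of "mv + n"] len m by auto
  ultimately obtain i where i: "k \<le> i" "i \<le> mv + n" "?\<pi> ! i = \<sigma> ! i"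
    using paths_to_meet[OF \<pi>(1) \<sigma>(1), of k "mv + n"] len exit m by auto
  have i_len: "i < length ?\<pi>" "i < length \<sigma>" using i len m by auto
  have "lpp ?wB (0,0) (mv,n) - lpp ?wB (0,0) (mu,n) \<le> lpp wr (0,0) (mv,n) - lpp wr (0,0) (mu,n)"
  proof (rule lpp_exchange[OF \<pi>(1) _ \<sigma> i_len i(3)])
    show "path_weight wr ?\<pi> = lpp wr (0,0) (mu,n)" using \<pi>(2) unfolding Lrho_def .
    show "?wB p \<le> wr p" for p using bulk nonneg unfolding bulk_weights_def by simp
    show "?wB p = wr p" if "p \<in> set (drop (Suc i) ?\<pi>)" for p
    proof -
      have "\<not> on_axes p" using that off set_drop_subset_set_drop[of "Suc k" "Suc i" ?\<pi>] i(1) by auto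
      then show ?thesis using bulk unfolding bulk_weights_def by simp
    qed
  qed
  then show ?thesis unfolding Lbulk_eq_lpp Lrho_def by linarith
qed

abbreviation target_column :: "real \<Rightarrow> nat \<Rightarrow> real \<Rightarrow> nat" where
  "target_column \<gamma> n u \<equiv> coord (\<gamma>\<^sup>2 * real n + beta1 \<gamma> * u * real n powr (2/3))"

lemma coord_mono: "x \<le> y \<Longrightarrow> coord x \<le> coord y"
  unfolding coord_def by (intro nat_mono floor_mono)

lemma powr_thirds:
  fixes x :: real assumes "0 < x"
  shows "x powr (2/3) = (x powr (1/3))\<^sup>2" and "x powr (-1/3) = 1 / x powr (1/3)"
  using assms by (simp_all add: powr_minus_divide powr_power)

lemma
  fixes \<gamma> :: real assumes "0 < \<gamma>"
  shows beta1_pos: "0 < beta1 \<gamma>" and beta2_pos: "0 < beta2 \<gamma>"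
    and beta1_eq_beta2: "beta1 \<gamma> = 2 * (beta2 \<gamma>)\<^sup>2 * (\<gamma> / (1 + \<gamma>))\<^sup>2"
    and slope_eq_beta2: "2 * (1 + \<gamma>) powr (5/3) * \<gamma> powr (1/3) = 2 * (beta2 \<gamma>)\<^sup>2 * (\<gamma> / (1 + \<gamma>))"
proof -
  define p q where "p = (1 + \<gamma>) powr (1/3)" and "q = \<gamma> powr (1/3)"
  have pq: "0 < p" "0 < q" using assms by (auto simp: p_def q_def)
  have P: "(1 + \<gamma>) powr (real k / 3) = p ^ k" and Q: "\<gamma> powr (real k / 3) = q ^ k" for k :: nat
    using assms by (simp_all add: p_def q_def powr_power)
  have "\<gamma> powr (-1/3) = 1 / q"
    using assms by (simp add: q_def powr_minus_divide)
  moreover have "1 + \<gamma> = p ^ 3" "\<gamma> = q ^ 3" "(1 + \<gamma>) powr (2/3) = p\<^sup>2" "(1 + \<gamma>) powr (4/3) = p ^ 4"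
    "(1 + \<gamma>) powr (5/3) = p ^ 5" "\<gamma> powr (4/3) = q ^ 4"
    using P[of 3] P[of 2] P[of 4] P[of 5] Q[of 3] Q[of 4] assms by simp_all
  ultimately have b1: "beta1 \<gamma> = 2 * p\<^sup>2 * q ^ 4" and b2: "beta2 \<gamma> = p ^ 4 / q"
    and pq3: "\<gamma> / (1 + \<gamma>) = q ^ 3 / p ^ 3" and b: "(1 + \<gamma>) powr (5/3) = p ^ 5"
    unfolding beta1_def beta2_def by simp_all
  show "0 < beta1 \<gamma>" "0 < beta2 \<gamma>" unfolding b1 b2 using pq by simp_all
  have "2 * p\<^sup>2 * q ^ 4 = 2 * (p ^ 4 / q)\<^sup>2 * (q ^ 3 / p ^ 3)\<^sup>2"
    using pq by (simp add: power2_eq_square divide_simps) algebra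
  then show "beta1 \<gamma> = 2 * (beta2 \<gamma>)\<^sup>2 * (\<gamma> / (1 + \<gamma>))\<^sup>2"
    unfolding b1 b2 pq3 .
  have "2 * p ^ 5 * q = 2 * (p ^ 4 / q)\<^sup>2 * (q ^ 3 / p ^ 3)"
    using pq by (simp add: power2_eq_square divide_simps) algebra
  then show "2 * (1 + \<gamma>) powr (5/3) * \<gamma> powr (1/3) = 2 * (beta2 \<gamma>)\<^sup>2 * (\<gamma> / (1 + \<gamma>))"
    unfolding b2 b pq3 q_def[symmetric] .
qed

lemma beta1_shift_mono:
  "0 < \<gamma> \<Longrightarrow> a \<le> b \<Longrightarrow> beta1 \<gamma> * a * real n powr (2/3) \<le> beta1 \<gamma> * b * real n powr (2/3)"
  using beta1_pos[of \<gamma>] by (intro mult_right_mono mult_left_mono) auto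

lemma Lresc_h_Bfun_increment_diff:
  assumes "0 < \<gamma>" "0 < n"
  shows "(Lresc_h w \<gamma> n u - Lresc_h w \<gamma> n v) - (Bfun wr \<rho> \<gamma> n u - Bfun wr \<rho> \<gamma> n v) - (u\<^sup>2 - v\<^sup>2)
    = (Lbulk w (target_column \<gamma> n u) n - Lbulk w (target_column \<gamma> n v) n
        - (Lrho wr (target_column \<gamma> n u) n - Lrho wr (target_column \<gamma> n v) n)) / (beta2 \<gamma> * real n powr (1/3))
      + (1 / (1 - \<rho>) * beta1 \<gamma> - 2 * (1 + \<gamma>) powr (5/3) * \<gamma> powr (1/3)) * (u - v) * real n powr (1/3) / beta2 \<gamma>"
proof -
  define c s where "c = 1 / (1 - \<rho>)" and "s = real n powr (1/3)"
  have "0 < s" "real n powr (2/3) = s\<^sup>2"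
    using assms powr_thirds(1)[of "real n"] by (simp_all add: s_def)
  then show ?thesis
    using beta2_pos[OF assms(1)] unfolding Lresc_h_def Bfun_def c_def[symmetric] s_def[symmetric]
    by (simp add: field_simps power2_eq_square)
qed

text \<open>With \<open>q = \<gamma> / (1 + \<gamma>) = 1 - \<rho>\<^sub>0\<close> one has \<open>\<beta>\<^sub>1 = 2 \<beta>\<^sub>2\<^sup>2 q\<^sup>2\<close> and
  \<open>2 (1 + \<gamma>)\<^bsup>5/3\<^esup> \<gamma>\<^bsup>1/3\<^esup> = 2 \<beta>\<^sub>2\<^sup>2 q\<close>; with \<open>b = \<beta>\<^sub>2\<close>, \<open>s = n\<^bsup>1/3\<^esup>\<close> and \<open>d = u - v\<close>
  the expressions bounded below are the rescaled drift differences between \<open>B\<^sup>\<rho>\<^sup>\<plusminus>\<close> and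
  the centring of \<open>L\<close>.\<close>
lemma drift_upper:
  fixes b q \<kappa> s d C :: real
  assumes b: "0 < b" and q: "0 < q" and s: "0 < s" and step: "\<kappa> / s \<le> q / 2"
    and d: "0 \<le> d" and C: "4 * b * \<kappa>\<^sup>2 * d / q \<le> C"
  shows "(2 * b\<^sup>2 * q\<^sup>2 / (q - \<kappa> / s) - 2 * b\<^sup>2 * q) * d * s / b \<le> 2 * b * \<kappa> * d + C * (1 / s)"
proof -
  define t where "t = \<kappa> / s"
  have \<kappa>: "\<kappa> = t * s" and qt: "q / 2 \<le> q - t" using step s by (simp_all add: t_def)
  have "(2 * b\<^sup>2 * q\<^sup>2 / (q - t) - 2 * b\<^sup>2 * q) * d * s / b = 2 * b * \<kappa> * d + 2 * b * \<kappa>\<^sup>2 * d / (q - t) * (1 / s)"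
    using b s q qt unfolding \<kappa> by (simp add: field_simps power2_eq_square)
  also have "2 * b * \<kappa>\<^sup>2 * d / (q - t) \<le> 2 * b * \<kappa>\<^sup>2 * d / (q / 2)"
    using b q qt d by (intro divide_left_mono) auto
  then have "2 * b * \<kappa>\<^sup>2 * d / (q - t) * (1 / s) \<le> C * (1 / s)"
    using C s by (intro mult_right_mono) auto
  finally show ?thesis unfolding t_def by simp
qed

lemma drift_lower:
  fixes b q \<kappa> s d :: real
  assumes b: "0 < b" and q: "0 < q" and s: "0 < s" and \<kappa>: "0 \<le> \<kappa>" and d: "0 \<le> d"
  shows "- 2 * b * \<kappa> * d \<le> (2 * b\<^sup>2 * q\<^sup>2 / (q + \<kappa> / s) - 2 * b\<^sup>2 * q) * d * s / b"
proof -
  define t where "t = \<kappa> / s"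
  have \<kappa>_eq: "\<kappa> = t * s" and t: "0 \<le> t" using \<kappa> s by (simp_all add: t_def)
  have "0 < q + t" using q t by linarith
  then have "(2 * b\<^sup>2 * q\<^sup>2 / (q + t) - 2 * b\<^sup>2 * q) * d * s / b = - 2 * b * \<kappa> * d * (q / (q + t))"
    using b s unfolding \<kappa>_eq by (simp add: divide_simps power2_eq_square) (simp add: algebra_simps)
  also have "\<dots> \<ge> - 2 * b * \<kappa> * d"
  proof -
    have "q / (q + t) \<le> 1" using q t by simp
    then have "2 * b * \<kappa> * d * (q / (q + t)) \<le> 2 * b * \<kappa> * d"
      using mult_left_mono[of "q / (q + t)" 1 "2 * b * \<kappa> * d"] b \<kappa> d by simp
    then show ?thesis by simp
  qed
  finally show ?thesis unfolding t_def by simp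
qed

lemma rescaled_increment_upper:
  fixes w wr :: "nat \<times> nat \<Rightarrow> real"
  assumes bulk: "\<And>p. \<not> on_axes p \<Longrightarrow> wr p = w p" and nonneg: "\<And>p. on_axes p \<Longrightarrow> 0 \<le> wr p"
    and wr: "distinct_path_weights wr" and n: "1 \<le> n" and \<gamma>: "0 < \<gamma>"
    and step: "\<kappa> * real n powr (-1/3) \<le> \<gamma> / (1 + \<gamma>) / 2"
    and Z: "0 \<le> Zexit wr (coord (\<gamma>\<^sup>2 * real n - beta1 \<gamma> * M1 * real n powr (2/3))) n"
    and uv: "-M1 \<le> v" "v \<le> u"
    and C: "4 * beta2 \<gamma> * \<kappa>\<^sup>2 * (u - v) / (\<gamma> / (1 + \<gamma>)) \<le> C"
  shows "Lresc_h w \<gamma> n u - Lresc_h w \<gamma> n v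
    \<le> Bfun wr (1 / (1 + \<gamma>) + \<kappa> * real n powr (-1/3)) \<gamma> n u
       - Bfun wr (1 / (1 + \<gamma>) + \<kappa> * real n powr (-1/3)) \<gamma> n v
       + (u\<^sup>2 - v\<^sup>2) + 2 * beta2 \<gamma> * \<kappa> * (u - v) + C * real n powr (-1/3)"
proof -
  define \<rho> s where "\<rho> = 1 / (1 + \<gamma>) + \<kappa> * real n powr (-1/3)" and "s = real n powr (1/3)"
  have s: "0 < s" and n13: "real n powr (-1/3) = 1 / s"
    using n powr_thirds(2)[of "real n"] by (simp_all add: s_def)
  have "coord (\<gamma>\<^sup>2 * real n - beta1 \<gamma> * M1 * real n powr (2/3)) \<le> target_column \<gamma> n v"
    "target_column \<gamma> n v \<le> target_column \<gamma> n u"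
    using beta1_shift_mono[OF \<gamma> uv(1)] beta1_shift_mono[OF \<gamma> uv(2)] by (auto intro!: coord_mono)
  then have "Lbulk w (target_column \<gamma> n u) n - Lbulk w (target_column \<gamma> n v) n
      - (Lrho wr (target_column \<gamma> n u) n - Lrho wr (target_column \<gamma> n v) n) \<le> 0"
    using Lbulk_increment_le_Lrho_increment[OF bulk nonneg wr n _ _ Z] by auto
  then have "(Lbulk w (target_column \<gamma> n u) n - Lbulk w (target_column \<gamma> n v) n
      - (Lrho wr (target_column \<gamma> n u) n - Lrho wr (target_column \<gamma> n v) n)) / (beta2 \<gamma> * s) \<le> 0"
    using s beta2_pos[OF \<gamma>] by (simp add: divide_nonpos_pos)
  moreover have "1 - \<rho> = \<gamma> / (1 + \<gamma>) - \<kappa> / s"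
    using \<gamma> unfolding \<rho>_def n13 by (simp add: field_simps)
  then have "(1 / (1 - \<rho>) * beta1 \<gamma> - 2 * (1 + \<gamma>) powr (5/3) * \<gamma> powr (1/3)) * (u - v) * s / beta2 \<gamma>
      \<le> 2 * beta2 \<gamma> * \<kappa> * (u - v) + C * real n powr (-1/3)"
    using drift_upper[OF beta2_pos[OF \<gamma>] _ s _ _ C] step uv \<gamma>
    unfolding beta1_eq_beta2[OF \<gamma>] slope_eq_beta2[OF \<gamma>] n13 by simp
  ultimately show ?thesis
    using Lresc_h_Bfun_increment_diff[OF \<gamma>, of n w u v wr \<rho>] n
    unfolding \<rho>_def[symmetric] s_def[symmetric] by simp
qed

lemma rescaled_increment_lower:
  fixes w wr :: "nat \<times> nat \<Rightarrow> real"
  assumes bulk: "\<And>p. \<not> on_axes p \<Longrightarrow> wr p = w p" and nonneg: "\<And>p. on_axes p \<Longrightarrow> 0 \<le> wr p"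
    and wr: "distinct_path_weights wr" and n: "1 \<le> n" and \<gamma>: "0 < \<gamma>" and \<kappa>: "0 \<le> \<kappa>"
    and Z: "Zexit wr (coord (\<gamma>\<^sup>2 * real n + beta1 \<gamma> * M2 * real n powr (2/3))) n \<le> 0"
    and uv: "v \<le> u" "u \<le> M2" and C: "0 \<le> C"
  shows "Lresc_h w \<gamma> n u - Lresc_h w \<gamma> n v
    \<ge> Bfun wr (1 / (1 + \<gamma>) - \<kappa> * real n powr (-1/3)) \<gamma> n u
       - Bfun wr (1 / (1 + \<gamma>) - \<kappa> * real n powr (-1/3)) \<gamma> n v
       + (u\<^sup>2 - v\<^sup>2) - 2 * beta2 \<gamma> * \<kappa> * (u - v) - C * real n powr (-1/3)"
proof -
  define \<rho> s where "\<rho> = 1 / (1 + \<gamma>) - \<kappa> * real n powr (-1/3)" and "s = real n powr (1/3)"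
  have s: "0 < s" and n13: "real n powr (-1/3) = 1 / s"
    using n powr_thirds(2)[of "real n"] by (simp_all add: s_def)
  have "target_column \<gamma> n v \<le> target_column \<gamma> n u"
    "target_column \<gamma> n u \<le> coord (\<gamma>\<^sup>2 * real n + beta1 \<gamma> * M2 * real n powr (2/3))"
    using beta1_shift_mono[OF \<gamma> uv(1)] beta1_shift_mono[OF \<gamma> uv(2)] by (auto intro!: coord_mono)
  then have "0 \<le> Lbulk w (target_column \<gamma> n u) n - Lbulk w (target_column \<gamma> n v) n
      - (Lrho wr (target_column \<gamma> n u) n - Lrho wr (target_column \<gamma> n v) n)"
    using Lrho_increment_le_Lbulk_increment[OF bulk nonneg wr n _ _ Z] by auto
  then have "0 \<le> (Lbulk w (target_column \<gamma> n u) n - Lbulk w (target_column \<gamma> n v) n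
      - (Lrho wr (target_column \<gamma> n u) n - Lrho wr (target_column \<gamma> n v) n)) / (beta2 \<gamma> * s)"
    using s beta2_pos[OF \<gamma>] by simp
  moreover have "1 - \<rho> = \<gamma> / (1 + \<gamma>) + \<kappa> / s"
    using \<gamma> unfolding \<rho>_def n13 by (simp add: field_simps)
  then have "- 2 * beta2 \<gamma> * \<kappa> * (u - v)
      \<le> (1 / (1 - \<rho>) * beta1 \<gamma> - 2 * (1 + \<gamma>) powr (5/3) * \<gamma> powr (1/3)) * (u - v) * s / beta2 \<gamma>"
    using drift_lower[OF beta2_pos[OF \<gamma>] _ s \<kappa>, of "\<gamma> / (1 + \<gamma>)" "u - v"] uv \<gamma>
    unfolding beta1_eq_beta2[OF \<gamma>] slope_eq_beta2[OF \<gamma>] by simp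
  moreover have "0 \<le> C * real n powr (-1/3)" using C by simp
  ultimately show ?thesis
    using Lresc_h_Bfun_increment_diff[OF \<gamma>, of n w u v wr \<rho>] n
    unfolding \<rho>_def[symmetric] s_def[symmetric] by simp
qed

lemma paths_to_distinct: "\<pi> \<in> paths_to m n \<Longrightarrow> distinct \<pi>"
  unfolding distinct_conv_nth using paths_to_nth_sum by metis

lemma path_weight_eq_sum:
  "\<pi> \<in> paths_to m n \<Longrightarrow> path_weight w \<pi> = (\<Sum>q\<in>set (tl \<pi>). w q)"
  unfolding path_weight_def
  by (rule sum_list_distinct_conv_sum_set) (simp add: distinct_tl paths_to_distinct)

lemma origin_notin_tl:
  assumes "\<pi> \<in> paths_to m n" shows "(0,0) \<notin> set (tl \<pi>)"
proof
  assume "(0,0) \<in> set (tl \<pi>)"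
  then obtain j where "j < length (tl \<pi>)" "tl \<pi> ! j = (0,0)" by (metis in_set_conv_nth)
  then have "\<pi> ! Suc j = (0,0)" "Suc j < length \<pi>" by (simp_all add: nth_tl)
  then show False using paths_to_nth_sum[OF assms, of "Suc j"] by simp
qed

lemma paths_to_exists_private_point:
  assumes \<pi>1: "\<pi>1 \<in> paths_to m n" and \<pi>2: "\<pi>2 \<in> paths_to m n" and "\<pi>1 \<noteq> \<pi>2"
  obtains p where "p \<in> set (tl \<pi>1)" "p \<notin> set (tl \<pi>2)"
proof -
  have len: "length \<pi>1 = length \<pi>2" using paths_to_length[OF \<pi>1] paths_to_length[OF \<pi>2] by simp
  then obtain i where i: "i < length \<pi>1" "\<pi>1 ! i \<noteq> \<pi>2 ! i" using assms(3) nth_equalityI by blast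
  have "i \<noteq> 0"
  proof
    assume "i = 0"
    then show False using i up_right_paths_nth_0[OF \<pi>1] up_right_paths_nth_0[OF \<pi>2] by simp
  qed
  then have "\<pi>1 ! i \<in> set (tl \<pi>1)" using i by (auto simp: in_set_conv_nth nth_tl intro!: exI[of _ "i - 1"])
  moreover have "\<pi>1 ! i \<notin> set (tl \<pi>2)"
  proof
    assume "\<pi>1 ! i \<in> set (tl \<pi>2)"
    then obtain j where j: "j < length (tl \<pi>2)" "\<pi>1 ! i = tl \<pi>2 ! j" by (metis in_set_conv_nth)
    then have "\<pi>1 ! i = \<pi>2 ! Suc j" "Suc j < length \<pi>2" by (simp_all add: nth_tl)
    moreover from this have "Suc j = i"
      using paths_to_nth_sum[OF \<pi>2] paths_to_nth_sum[OF \<pi>1 i(1)] by metis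
    ultimately show False using i by simp
  qed
  ultimately show ?thesis by (rule that)
qed

context prob_space
begin

lemma AE_add_nonzero_if_indep_density:
  fixes X Y :: "'a \<Rightarrow> real"
  assumes indep: "indep_var borel Y borel X" and X: "distributed M lborel X f"
  shows "AE x in M. X x + Y x \<noteq> 0"
proof -
  have rvY: "random_variable borel Y" and rvX: "random_variable borel X"
    using indep by (auto dest: indep_var_rv1 indep_var_rv2)
  interpret X: sigma_finite_measure "distr M borel X"
    by (rule prob_space_imp_sigma_finite, rule prob_space_distr[OF rvX])
  define A where "A = {z :: real \<times> real. snd z + fst z = 0}"
  have "{z \<in> space (borel \<Otimes>\<^sub>M borel). snd z + fst z = (0::real)} \<in> sets (borel \<Otimes>\<^sub>M borel)"
    by measurable
  then have A: "A \<in> sets (borel \<Otimes>\<^sub>M borel)" unfolding A_def by (simp add: space_pair_measure)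
  have no_atoms: "emeasure (distr M borel X) {c} = 0" for c
  proof -
    have "distr M borel X = density lborel f"
      using distributed_distr_eq_density[OF X] by (simp cong: distr_cong)
    then show ?thesis
      using emeasure_density[OF distributed_borel_measurable[OF X], of "{c}"]
        nn_integral_null_set[of "{c}" lborel f] by simp
  qed
  have "emeasure (distr M (borel \<Otimes>\<^sub>M borel) (\<lambda>x. (Y x, X x))) A
      = emeasure (distr M borel Y \<Otimes>\<^sub>M distr M borel X) A"
    using indep unfolding indep_var_distribution_eq by auto
  also have "\<dots> = (\<integral>\<^sup>+y. emeasure (distr M borel X) (Pair y -` A) \<partial>distr M borel Y)"
    by (rule X.emeasure_pair_measure_alt) (use A in \<open>simp cong: sets_pair_measure_cong\<close>)
  also have "\<dots> = 0"
  proof -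
    have "Pair y -` A = {-y}" for y :: real unfolding A_def by auto
    then show ?thesis using no_atoms by simp
  qed
  finally have "emeasure M {x\<in>space M. X x + Y x = 0} = 0"
    using rvX rvY A by (subst (asm) emeasure_distr) (auto simp: A_def vimage_def Int_def conj_commute)
  moreover have "{x\<in>space M. X x + Y x = 0} \<in> sets M" using rvX rvY by measurable
  ultimately show ?thesis by (intro AE_I'[of "{x\<in>space M. X x + Y x = 0}"]) auto
qed

lemma indep_var_restrict_component:
  fixes X :: "'i \<Rightarrow> 'a \<Rightarrow> real"
  assumes ind: "indep_vars (\<lambda>_. borel) X I" and "p \<in> I" "J \<subseteq> I" "p \<notin> J"
    and g: "g \<in> borel_measurable (PiM J (\<lambda>_. borel))"
  shows "indep_var borel (\<lambda>x. g (restrict (\<lambda>i. X i x) J)) borel (X p)"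
proof -
  have "indep_var (PiM J (\<lambda>_. borel)) (\<lambda>x. restrict (\<lambda>i. X i x) J) (PiM {p} (\<lambda>_. borel)) (\<lambda>x. restrict (\<lambda>i. X i x) {p})"
    by (rule indep_var_restrict[OF ind]) (use assms in auto)
  then have "indep_var borel (g \<circ> (\<lambda>x. restrict (\<lambda>i. X i x) J)) borel ((\<lambda>h. h p) \<circ> (\<lambda>x. restrict (\<lambda>i. X i x) {p}))"
    by (rule indep_var_compose[OF _ g]) (rule measurable_component_singleton, simp)
  then show ?thesis by (simp add: comp_def)
qed

lemma AE_path_weights_differ:
  fixes X :: "nat \<times> nat \<Rightarrow> 'a \<Rightarrow> real"
  assumes ind: "indep_vars (\<lambda>_. borel) X (UNIV - {(0,0)})"
    and dens: "\<And>p. p \<noteq> (0,0) \<Longrightarrow> \<exists>f. distributed M lborel (X p) f"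
    and \<pi>1: "\<pi>1 \<in> paths_to m n" and \<pi>2: "\<pi>2 \<in> paths_to m n" and ne: "\<pi>1 \<noteq> \<pi>2"
  shows "AE x in M. path_weight (\<lambda>q. X q x) \<pi>1 \<noteq> path_weight (\<lambda>q. X q x) \<pi>2"
proof -
  define S1 S2 where "S1 = set (tl \<pi>1)" and "S2 = set (tl \<pi>2)"
  obtain p where p: "p \<in> S1" "p \<notin> S2"
    using paths_to_exists_private_point[OF \<pi>1 \<pi>2 ne] unfolding S1_def S2_def .
  define J where "J = (S1 \<union> S2) - {p}"
  define g where "g h = (\<Sum>q\<in>S1 - {p}. h q) - (\<Sum>q\<in>S2. h q)" for h :: "nat \<times> nat \<Rightarrow> real"
  have origin: "(0,0) \<notin> S1 \<union> S2" using origin_notin_tl \<pi>1 \<pi>2 unfolding S1_def S2_def by blast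
  have "p \<noteq> (0,0)" using p(1) origin by blast
  then obtain f where "distributed M lborel (X p) f" using dens by blast
  moreover have "indep_var borel (\<lambda>x. g (restrict (\<lambda>i. X i x) J)) borel (X p)"
  proof (rule indep_var_restrict_component[OF ind, of p J g])
    have sum_measurable: "(\<lambda>h. \<Sum>q\<in>S. h q :: real) \<in> borel_measurable (PiM J (\<lambda>_. borel))"
      if "S \<subseteq> J" for S
    proof (rule borel_measurable_sum)
      fix q assume "q \<in> S"
      then show "(\<lambda>h. h q) \<in> borel_measurable (PiM J (\<lambda>_. borel))"
        using that by (intro measurable_component_singleton) auto
    qed
    show "g \<in> borel_measurable (PiM J (\<lambda>_. borel))"
      unfolding g_def using p(2) by (intro borel_measurable_diff sum_measurable) (auto simp: J_def)
    show "p \<in> UNIV - {(0,0)}" "J \<subseteq> UNIV - {(0,0)}" "p \<notin> J"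
      using p(1) origin by (auto simp: J_def)
  qed
  ultimately have "AE x in M. X p x + g (restrict (\<lambda>i. X i x) J) \<noteq> 0"
    by (intro AE_add_nonzero_if_indep_density)
  moreover have "X p x + g (restrict (\<lambda>i. X i x) J)
      = path_weight (\<lambda>q. X q x) \<pi>1 - path_weight (\<lambda>q. X q x) \<pi>2" for x
  proof -
    have "g (restrict (\<lambda>i. X i x) J) = (\<Sum>q\<in>S1 - {p}. X q x) - (\<Sum>q\<in>S2. X q x)"
      unfolding g_def J_def by (intro arg_cong2[where f = "(-)"] sum.cong) (use p in auto)
    then show ?thesis
      using p(1) unfolding path_weight_eq_sum[OF \<pi>1] path_weight_eq_sum[OF \<pi>2] S1_def S2_def
      by (simp add: sum.remove)
  qed
  ultimately show ?thesis by simp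
qed

lemma AE_distinct_path_weights:
  fixes X :: "nat \<times> nat \<Rightarrow> 'a \<Rightarrow> real"
  assumes ind: "indep_vars (\<lambda>_. borel) X (UNIV - {(0,0)})"
    and dens: "\<And>p. p \<noteq> (0,0) \<Longrightarrow> \<exists>f. distributed M lborel (X p) f"
  shows "AE x in M. distinct_path_weights (\<lambda>q. X q x)"
proof -
  have pair: "AE x in M. path_weight (\<lambda>q. X q x) \<pi>1 = path_weight (\<lambda>q. X q x) \<pi>2 \<longrightarrow> \<pi>1 = \<pi>2"
    if \<pi>1: "\<pi>1 \<in> paths_to m n" and \<pi>2: "\<pi>2 \<in> paths_to m n" for m n \<pi>1 \<pi>2
  proof (cases "\<pi>1 = \<pi>2")
    case False
    then show ?thesis using AE_path_weights_differ[OF ind dens \<pi>1 \<pi>2] by simp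
  qed simp
  have "AE x in M. inj_on (path_weight (\<lambda>q. X q x)) (paths_to m n)" for m n
    unfolding inj_on_def by (intro AE_finite_allI finite_paths_to pair)
  then show ?thesis unfolding distinct_path_weights_def by (simp add: AE_all_countable)
qed

lemma AE_nonneg_if_exponential:
  assumes "distributed M lborel X (exponential_density l)"
  shows "AE x in M. 0 \<le> X x"
  by (subst distributed_AE2[OF assms]) (auto simp: erlang_density_def)

end

lemma eventually_step_le:
  assumes "0 < \<delta>"
  shows "eventually (\<lambda>n. K * real n powr (-1/3) \<le> \<delta>) sequentially"
proof -
  have "((\<lambda>n. K * real n powr (-1/3)) \<longlongrightarrow> 0) sequentially"
    by (intro tendsto_mult_right_zero tendsto_neg_powr filterlim_real_sequentially) simp
  then have "eventually (\<lambda>n. K * real n powr (-1/3) < \<delta>) sequentially"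
    using assms by (rule order_tendstoD(2))
  then show ?thesis by (rule eventually_mono) simp
qed

lemma step_le_uniform:
  fixes a b \<gamma> \<kappa> K x :: real
  assumes "0 < a" "a \<le> \<gamma>" "\<gamma> \<le> b" "\<kappa> \<le> K" "0 \<le> x"
    and "K * x \<le> min (a / (1 + a)) (1 / (1 + b)) / 2"
  shows "\<kappa> * x \<le> min (\<gamma> / (1 + \<gamma>)) (1 / (1 + \<gamma>)) / 2"
proof -
  have "\<kappa> * x \<le> K * x" using assms by (simp add: mult_right_mono)
  also have "\<dots> \<le> min (a / (1 + a)) (1 / (1 + b)) / 2" by (rule assms(6))
  also have "\<dots> \<le> min (\<gamma> / (1 + \<gamma>)) (1 / (1 + \<gamma>)) / 2"
    using assms by (intro divide_right_mono min.mono) (simp_all add: field_simps)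
  finally show ?thesis .
qed

lemma drift_error_le_uniform:
  assumes "0 < a" "a \<le> \<gamma>" "\<gamma> \<le> b" "0 < \<kappa>" "\<kappa> \<le> K" "-M1 \<le> v" "v \<le> u" "u \<le> M2"
  shows "4 * beta2 \<gamma> * \<kappa>\<^sup>2 * (u - v) / (\<gamma> / (1 + \<gamma>))
    \<le> 4 * ((1 + b) powr (4/3) * a powr (-1/3)) * K\<^sup>2 * (\<bar>M1\<bar> + \<bar>M2\<bar>) * ((1 + a) / a)"
proof -
  have "beta2 \<gamma> \<le> (1 + b) powr (4/3) * a powr (-1/3)"
    unfolding beta2_def using assms by (intro mult_mono powr_mono2 powr_mono2') auto
  moreover have "\<kappa>\<^sup>2 \<le> K\<^sup>2" using assms by (simp add: power_mono)
  moreover have "u - v \<le> \<bar>M1\<bar> + \<bar>M2\<bar>" using assms by linarith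
  moreover have "1 / (\<gamma> / (1 + \<gamma>)) \<le> (1 + a) / a" using assms by (simp add: field_simps)
  ultimately have "4 * beta2 \<gamma> * \<kappa>\<^sup>2 * (u - v) * (1 / (\<gamma> / (1 + \<gamma>)))
      \<le> 4 * ((1 + b) powr (4/3) * a powr (-1/3)) * K\<^sup>2 * (\<bar>M1\<bar> + \<bar>M2\<bar>) * ((1 + a) / a)"
    using assms beta2_pos[of \<gamma>] by (intro mult_mono) auto
  then show ?thesis by simp
qed

locale coupled_exponential_lpp = prob_space M for M :: "'s measure" +
  fixes \<omega> :: "real \<Rightarrow> nat \<times> nat \<Rightarrow> 's \<Rightarrow> real"
  assumes indep: "\<forall>\<rho>\<in>{0<..<1}. indep_vars (\<lambda>_. borel) (\<omega> \<rho>) (UNIV - {(0,0)})"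
    and origin: "\<forall>\<rho> x. \<omega> \<rho> (0,0) x = 0"
    and horiz: "\<forall>\<rho>\<in>{0<..<1}. \<forall>i\<ge>1. distributed M lborel (\<omega> \<rho> (i,0)) (exponential_density (1 - \<rho>))"
    and vert: "\<forall>\<rho>\<in>{0<..<1}. \<forall>j\<ge>1. distributed M lborel (\<omega> \<rho> (0,j)) (exponential_density \<rho>)"
    and bulk: "\<forall>\<rho>\<in>{0<..<1}. \<forall>i\<ge>1. \<forall>j\<ge>1. distributed M lborel (\<omega> \<rho> (i,j)) (exponential_density 1)"
    and coupled: "\<forall>\<rho>\<in>{0<..<1}. \<forall>\<rho>'\<in>{0<..<1}. \<forall>i\<ge>1. \<forall>j\<ge>1. \<forall>x\<in>space M.
                    \<omega> \<rho> (i,j) x = \<omega> \<rho>' (i,j) x"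
begin

lemma exponential_weight:
  assumes "\<rho> \<in> {0<..<1}" "p \<noteq> (0,0)"
  obtains l where "distributed M lborel (\<omega> \<rho> p) (exponential_density l)"
proof (cases p)
  case (Pair i j)
  then consider "i = 0" "1 \<le> j" | "1 \<le> i" "j = 0" | "1 \<le> i" "1 \<le> j" using assms(2) by fastforce
  then show ?thesis using that horiz vert bulk assms(1) Pair by cases blast+
qed

lemma AE_weights_distinct_nonneg:
  assumes "\<rho> \<in> {0<..<1}"
  shows "AE x in M. distinct_path_weights (\<lambda>p. \<omega> \<rho> p x) \<and> (\<forall>p. 0 \<le> \<omega> \<rho> p x)"
proof -
  have "\<exists>f. distributed M lborel (\<omega> \<rho> p) f" if "p \<noteq> (0,0)" for p
    using exponential_weight[OF assms that] by metis
  then have "AE x in M. distinct_path_weights (\<lambda>p. \<omega> \<rho> p x)"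
    using indep assms by (intro AE_distinct_path_weights) auto
  moreover have "AE x in M. 0 \<le> \<omega> \<rho> p x" for p
    using origin by (cases "p = (0,0)") (auto elim!: exponential_weight[OF assms] intro: AE_nonneg_if_exponential)
  then have "AE x in M. \<forall>p. 0 \<le> \<omega> \<rho> p x" by (simp add: AE_all_countable)
  ultimately show ?thesis by eventually_elim simp
qed

lemma bulk_weights_coupled:
  assumes "\<rho> \<in> {0<..<1}" "\<rho>' \<in> {0<..<1}" "x \<in> space M" "\<not> on_axes p"
  shows "\<omega> \<rho> p x = \<omega> \<rho>' p x"
  using coupled assms by (cases p) (metis One_nat_def Suc_leI fst_conv neq0_conv snd_conv)

lemma step_bounds:
  assumes "0 < \<gamma>" "1 \<le> n" "0 < \<kappa>"
    and "\<kappa> * real n powr (-1/3) \<le> min (\<gamma> / (1 + \<gamma>)) (1 / (1 + \<gamma>)) / 2"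
  shows "1 / (1 + \<gamma>) \<in> {0<..<1}" "1 / (1 + \<gamma>) + \<kappa> * real n powr (-1/3) \<in> {0<..<1}"
    "1 / (1 + \<gamma>) - \<kappa> * real n powr (-1/3) \<in> {0<..<1}"
    "\<kappa> * real n powr (-1/3) \<le> \<gamma> / (1 + \<gamma>) / 2"
proof -
  define t q r where "t = \<kappa> * real n powr (-1/3)" and "q = \<gamma> / (1 + \<gamma>)" and "r = 1 / (1 + \<gamma>)"
  have "0 < t" using assms by (simp add: t_def)
  moreover have "t \<le> q / 2" "t \<le> r / 2"
    using order_trans[OF assms(4) divide_right_mono[OF min.cobounded1]]
      order_trans[OF assms(4) divide_right_mono[OF min.cobounded2]] unfolding t_def q_def r_def by simp_all
  moreover have "q + r = 1" "0 < r" using assms(1) by (simp_all add: q_def r_def field_simps)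
  ultimately have "r \<in> {0<..<1}" "r + t \<in> {0<..<1}" "r - t \<in> {0<..<1}" "t \<le> q / 2"
    by auto
  then show "1 / (1 + \<gamma>) \<in> {0<..<1}" "1 / (1 + \<gamma>) + \<kappa> * real n powr (-1/3) \<in> {0<..<1}"
    "1 / (1 + \<gamma>) - \<kappa> * real n powr (-1/3) \<in> {0<..<1}"
    "\<kappa> * real n powr (-1/3) \<le> \<gamma> / (1 + \<gamma>) / 2"
    unfolding t_def q_def r_def .
qed

lemma AE_rescaled_increment_upper:
  assumes \<gamma>: "0 < \<gamma>" and n: "1 \<le> n" and \<kappa>: "0 < \<kappa>"
    and step: "\<kappa> * real n powr (-1/3) \<le> min (\<gamma> / (1 + \<gamma>)) (1 / (1 + \<gamma>)) / 2"
    and C: "\<And>u v. -M1 \<le> v \<Longrightarrow> v \<le> u \<Longrightarrow> u \<le> M2 \<Longrightarrow> 4 * beta2 \<gamma> * \<kappa>\<^sup>2 * (u - v) / (\<gamma> / (1 + \<gamma>)) \<le> C"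
  defines "\<rho> \<equiv> 1 / (1 + \<gamma>) + \<kappa> * real n powr (-1/3)"
  shows "AE x in M.
    Zexit (\<lambda>p. \<omega> \<rho> p x) (coord (\<gamma>\<^sup>2 * real n - beta1 \<gamma> * M1 * real n powr (2/3))) n \<ge> 0 \<longrightarrow>
    (\<forall>u v. -M1 \<le> v \<and> v \<le> u \<and> u \<le> M2 \<longrightarrow>
       Lresc_h (\<lambda>p. \<omega> (1 / (1 + \<gamma>)) p x) \<gamma> n u - Lresc_h (\<lambda>p. \<omega> (1 / (1 + \<gamma>)) p x) \<gamma> n v
       \<le> Bfun (\<lambda>p. \<omega> \<rho> p x) \<rho> \<gamma> n u - Bfun (\<lambda>p. \<omega> \<rho> p x) \<rho> \<gamma> n v
          + (u\<^sup>2 - v\<^sup>2) + 2 * beta2 \<gamma> * \<kappa> * (u - v) + C * real n powr (-1/3))"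
proof -
  note bounds = step_bounds[OF \<gamma> n \<kappa> step, folded \<rho>_def]
  show ?thesis
    using AE_weights_distinct_nonneg[OF bounds(2)] AE_space
  proof eventually_elim
    case (elim x)
    have bulk: "\<And>p. \<not> on_axes p \<Longrightarrow> \<omega> \<rho> p x = \<omega> (1 / (1 + \<gamma>)) p x"
      using bulk_weights_coupled[OF bounds(2,1) elim(2)] .
    show ?case
      unfolding \<rho>_def using rescaled_increment_upper[OF bulk[unfolded \<rho>_def] _ _ n \<gamma> bounds(4)] elim C
      by (auto simp: \<rho>_def)
  qed
qed

lemma AE_rescaled_increment_lower:
  assumes \<gamma>: "0 < \<gamma>" and n: "1 \<le> n" and \<kappa>: "0 < \<kappa>"
    and step: "\<kappa> * real n powr (-1/3) \<le> min (\<gamma> / (1 + \<gamma>)) (1 / (1 + \<gamma>)) / 2"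
    and C: "0 \<le> C"
  defines "\<rho> \<equiv> 1 / (1 + \<gamma>) - \<kappa> * real n powr (-1/3)"
  shows "AE x in M.
    Zexit (\<lambda>p. \<omega> \<rho> p x) (coord (\<gamma>\<^sup>2 * real n + beta1 \<gamma> * M2 * real n powr (2/3))) n \<le> 0 \<longrightarrow>
    (\<forall>u v. -M1 \<le> v \<and> v \<le> u \<and> u \<le> M2 \<longrightarrow>
       Lresc_h (\<lambda>p. \<omega> (1 / (1 + \<gamma>)) p x) \<gamma> n u - Lresc_h (\<lambda>p. \<omega> (1 / (1 + \<gamma>)) p x) \<gamma> n v
       \<ge> Bfun (\<lambda>p. \<omega> \<rho> p x) \<rho> \<gamma> n u - Bfun (\<lambda>p. \<omega> \<rho> p x) \<rho> \<gamma> n v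
          + (u\<^sup>2 - v\<^sup>2) - 2 * beta2 \<gamma> * \<kappa> * (u - v) - C * real n powr (-1/3))"
proof -
  note bounds = step_bounds[OF \<gamma> n \<kappa> step, folded \<rho>_def]
  show ?thesis
    using AE_weights_distinct_nonneg[OF bounds(3)] AE_space
  proof eventually_elim
    case (elim x)
    have bulk: "\<And>p. \<not> on_axes p \<Longrightarrow> \<omega> \<rho> p x = \<omega> (1 / (1 + \<gamma>)) p x"
      using bulk_weights_coupled[OF bounds(3,1) elim(2)] .
    show ?case
      unfolding \<rho>_def using rescaled_increment_lower[OF bulk[unfolded \<rho>_def] _ _ n \<gamma> less_imp_le[OF \<kappa>]] elim C
      by (auto simp: \<rho>_def)
  qed
qed

end

theorem lemma3p4:
  fixes M :: "'s measure"
    and \<omega> :: "real \<Rightarrow> nat \<times> nat \<Rightarrow> 's \<Rightarrow> real"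
  assumes "prob_space M"
    and indep: "\<forall>\<rho>\<in>{0<..<1}. prob_space.indep_vars M (\<lambda>_. borel) (\<omega> \<rho>) (UNIV - {(0,0)})"
    and origin: "\<forall>\<rho> x. \<omega> \<rho> (0,0) x = 0"
    and horiz: "\<forall>\<rho>\<in>{0<..<1}. \<forall>i\<ge>1. distributed M lborel (\<omega> \<rho> (i,0)) (exponential_density (1 - \<rho>))"
    and vert: "\<forall>\<rho>\<in>{0<..<1}. \<forall>j\<ge>1. distributed M lborel (\<omega> \<rho> (0,j)) (exponential_density \<rho>)"
    and bulk: "\<forall>\<rho>\<in>{0<..<1}. \<forall>i\<ge>1. \<forall>j\<ge>1. distributed M lborel (\<omega> \<rho> (i,j)) (exponential_density 1)"
    and coupled: "\<forall>\<rho>\<in>{0<..<1}. \<forall>\<rho>'\<in>{0<..<1}. \<forall>i\<ge>1. \<forall>j\<ge>1. \<forall>x\<in>space M.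
                    \<omega> \<rho> (i,j) x = \<omega> \<rho>' (i,j) x"
  shows "\<forall>(M1::real) (M2::real) (a::real) (b::real) (K::real). 0 < a \<and> a \<le> b \<and> 0 < K \<longrightarrow>
    (\<exists>(C::real) (N::nat). \<forall>n\<ge>N. \<forall>\<gamma>\<in>{a..b}. \<forall>\<kappa>\<in>{0<..K}.
       (let \<rho>0 = 1 / (1 + \<gamma>);
            \<rho>p = \<rho>0 + \<kappa> * real n powr (-1/3);
            \<rho>m = \<rho>0 - \<kappa> * real n powr (-1/3)
        in
        (AE x in M.
           Zexit (\<lambda>p. \<omega> \<rho>p p x) (coord (\<gamma>\<^sup>2 * real n - beta1 \<gamma> * M1 * real n powr (2/3))) n \<ge> 0 \<longrightarrow>
           (\<forall>u v. -M1 \<le> v \<and> v \<le> u \<and> u \<le> M2 \<longrightarrow>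
              Lresc_h (\<lambda>p. \<omega> \<rho>0 p x) \<gamma> n u - Lresc_h (\<lambda>p. \<omega> \<rho>0 p x) \<gamma> n v
              \<le> Bfun (\<lambda>p. \<omega> \<rho>p p x) \<rho>p \<gamma> n u - Bfun (\<lambda>p. \<omega> \<rho>p p x) \<rho>p \<gamma> n v
                 + (u\<^sup>2 - v\<^sup>2) + 2 * beta2 \<gamma> * \<kappa> * (u - v) + C * real n powr (-1/3))) \<and>
        (AE x in M.
           Zexit (\<lambda>p. \<omega> \<rho>m p x) (coord (\<gamma>\<^sup>2 * real n + beta1 \<gamma> * M2 * real n powr (2/3))) n \<le> 0 \<longrightarrow>
           (\<forall>u v. -M1 \<le> v \<and> v \<le> u \<and> u \<le> M2 \<longrightarrow>
              Lresc_h (\<lambda>p. \<omega> \<rho>0 p x) \<gamma> n u - Lresc_h (\<lambda>p. \<omega> \<rho>0 p x) \<gamma> n v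
              \<ge> Bfun (\<lambda>p. \<omega> \<rho>m p x) \<rho>m \<gamma> n u - Bfun (\<lambda>p. \<omega> \<rho>m p x) \<rho>m \<gamma> n v
                 + (u\<^sup>2 - v\<^sup>2) - 2 * beta2 \<gamma> * \<kappa> * (u - v) - C * real n powr (-1/3)))))"
proof (intro allI impI, goal_cases)
  case (1 M1 M2 a b K)
  then have a: "0 < a" and ab: "a \<le> b" by auto
  interpret coupled_exponential_lpp M \<omega>
    by (intro coupled_exponential_lpp.intro coupled_exponential_lpp_axioms.intro assms)
  define C where "C = 4 * ((1 + b) powr (4/3) * a powr (-1/3)) * K\<^sup>2 * (\<bar>M1\<bar> + \<bar>M2\<bar>) * ((1 + a) / a)"
  have "0 < min (a / (1 + a)) (1 / (1 + b)) / 2" using a ab by simp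
  then obtain N where N: "\<And>n. N \<le> n \<Longrightarrow> K * real n powr (-1/3) \<le> min (a / (1 + a)) (1 / (1 + b)) / 2"
    using eventually_step_le unfolding eventually_sequentially by meson
  show ?case
  proof (intro exI[of _ C] exI[of _ "max N 1"] allI impI ballI, goal_cases)
    case (1 n \<gamma> \<kappa>)
    then have "\<kappa> * real n powr (-1/3) \<le> min (\<gamma> / (1 + \<gamma>)) (1 / (1 + \<gamma>)) / 2"
      using step_le_uniform[OF a] N[of n] by auto
    moreover have "4 * beta2 \<gamma> * \<kappa>\<^sup>2 * (u - v) / (\<gamma> / (1 + \<gamma>)) \<le> C"
      if "-M1 \<le> v" "v \<le> u" "u \<le> M2" for u v
      unfolding C_def using drift_error_le_uniform[OF a] 1 that by auto
    moreover have "0 \<le> C" using a unfolding C_def by simp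
    ultimately show ?case
      unfolding Let_def using 1 a
      by (intro conjI AE_rescaled_increment_upper AE_rescaled_increment_lower) auto
  qed
qed

end
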